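(* Let $m\in\mathbb Z_{\ge0}$, let $\lambda/\mu$ be an r-shape and $\mathbf a,\mathbf b$ column flags for it with conjugates $\mathbf a',\mathbf b'$. Write $\tau(k)=-k+1$, $\eta(k)=k-m$, $u_j=\max(1,a_j)$, $v_i=\min(m,b_i)$, and set $\alpha_i=\beta_i=0$ for $i\le0$. Then $$\mathsf g^{\mathbf a,\mathbf b}_{\lambda/\mu}(\mathbf x_m;\boldsymbol\alpha,\boldsymbol\beta)=\det\left[e_{\lambda'_i-i-\mu'_j+j}\left(\mathbf x_{u_j,v_i},\overline{\boldsymbol\alpha}_{\tau(b_i),\tau(a_j)},\boldsymbol\beta_{\eta(a_j),\eta(b_i)}\,/\,\overline{\boldsymbol\alpha}_{\eta(a'_j),\eta(b'_i)},\boldsymbol\beta_{\tau(b'_i),\tau(a'_j)}\right)\right]_{1\le i,j\le n}$$ for $n\ge\lambda_1$. In particular, if $\lambda/\mu$ is a usual skew shape and $a_i=-i+2$, $b_i=\lambda'_i+m-1$ for $i\in[n]$, then $\mathsf S^{\mathbf a,\mathbf b}_{\lambda/\mu}(\mathbf y/\mathbf z)|_g=\mathsf g^{\mathbf a,\mathbf b}_{\lambda/\mu}(\mathbf x_m;\boldsymbol\alpha,\boldsymbol\beta)=g_{\lambda/\mu}(\mathbf x_m;\boldsymbol\alpha,\boldsymbol\beta)$.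
   Context: Young diagrams in English notation; $\lambda'$ conjugate partition. An r-shape is $(\lambda/\mu,r)$ with shifted contents $c(i,j)=j-i+r-1+\lambda'_1$; a usual skew shape has $c(i,j)=j-i$. Column flags: for $n\ge\lambda_1$, $\mathbf a,\mathbf b\in\mathbb Z^n$ with $a_i-a_{i+1}\le\mu'_i-\mu'_{i+1}+1$, $b_i-b_{i+1}\le\lambda'_i-\lambda'_{i+1}+1$ whenever $\mu'_i<\lambda'_{i+1}$; conjugate flags $a'_i=a_i+c(\gamma_i)$, $b'_i=b_i+c(\delta_i)$ ($\gamma_i,\delta_i$ top and bottom cells of column $i$). For a sequence of variables $\mathbf w$, $\mathbf w_{p,q}=(w_p,\ldots,w_q)$ (empty if $p>q$), $\mathbf w_k=\mathbf w_{1,k}$, $\overline{\mathbf w}=(-w_i)$; commas between variable sets denote their union. $e_n(\mathbf x/\mathbf w)=\sum_{i=0}^n(-1)^{n-i}e_i(\mathbf x)h_{n-i}(\mathbf w)$ ($e_0=1$, $e_n=0$ for $n<0$). With $\mathbf y=(y_i)_{i\in\mathbb Z},\mathbf z=(z_i)_{i\in\mathbb Z}$: $\mathsf S^{\mathbf a,\mathbf b}_{\lambda/\mu}(\mathbf y/\mathbf z)=\det[e_{\lambda'_i-i-\mu'_j+j}(\mathbf y_{a_j,b_i}/\mathbf z_{a'_j,b'_i})]_{1\le i,j\le n}$. The $g$-specialization (for given $m$) substitutes $y_i\mapsto x_i$ ($i\in[m]$), $y_i\mapsto\beta_{i-m}$ ($i>m$), $y_i\mapsto-\alpha_{-i+1}$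 ($i\le0$), and $z_i\mapsto0$ ($i\in[m]$), $z_i\mapsto-\alpha_{i-m}$ ($i>m$), $z_i\mapsto\beta_{-i+1}$ ($i\le0$). The flagged dual Grothendieck enumerator is $\mathsf g^{\mathbf a,\mathbf b}_{\lambda/\mu}(\mathbf x_m;\boldsymbol\alpha,\boldsymbol\beta)=\mathsf S^{\mathbf a,\mathbf b}_{\lambda/\mu}(\mathbf y/\mathbf z)|_g$. The dual refined canonical stable Grothendieck polynomial is $g_{\lambda/\mu}(\mathbf x;\boldsymbol\alpha,\boldsymbol\beta)=\det[e_{\lambda'_i-i-\mu'_j+j}(\mathbf x,\overline{\boldsymbol\alpha}_{j-1},\boldsymbol\beta_{\lambda'_i-1}/\overline{\boldsymbol\alpha}_{i-1},\boldsymbol\beta_{\mu'_j})]_{1\le i,j\le n}$, $n\ge\lambda_1$; $g_{\lambda/\mu}(\mathbf x_m;\ldots)$ is this with $\mathbf x=(x_1,\ldots,x_m)$. *)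

theory Defs
  imports "HOL-Library.FuncSet" "Jordan_Normal_Form.Determinant"
begin

definition is_partition :: "nat list \<Rightarrow> bool" where
  "is_partition lam \<longleftrightarrow> sorted_wrt (\<ge>) lam \<and> (\<forall>p\<in>set lam. 0 < p)"

definition part :: "nat list \<Rightarrow> nat \<Rightarrow> nat" where
  "part lam i = (if 1 \<le> i \<and> i \<le> length lam then lam ! (i - 1) else 0)"

definition conjp :: "nat list \<Rightarrow> nat \<Rightarrow> nat" where
  "conjp lam j = length (filter (\<lambda>p. j \<le> p) lam)"

definition skew_shape :: "nat list \<Rightarrow> nat list \<Rightarrow> bool" where
  "skew_shape lam mu \<longleftrightarrow> is_partition lam \<and> is_partition mu \<and> (\<forall>i\<ge>1. part mu i \<le> part lam i)"

text \<open>Contents are c(i,j) = j - i + d with an offset d: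
  d = r - 1 + lam'_1 for the r-shape (lam/mu, r), and d = 0 for a usual skew shape.\<close>
definition roffset :: "nat list \<Rightarrow> int \<Rightarrow> int" where
  "roffset lam r = r - 1 + int (conjp lam 1)"

definition content :: "int \<Rightarrow> nat \<Rightarrow> nat \<Rightarrow> int" where
  "content d i j = int j - int i + d"

text \<open>Top cell of column i is (mu'_i + 1, i), bottom cell is (lam'_i, i).\<close>
definition ctop :: "nat list \<Rightarrow> int \<Rightarrow> nat \<Rightarrow> int" where
  "ctop mu d i = content d (conjp mu i + 1) i"

definition cbot :: "nat list \<Rightarrow> int \<Rightarrow> nat \<Rightarrow> int" where
  "cbot lam d i = content d (conjp lam i) i"

definition column_flags :: "nat \<Rightarrow> nat list \<Rightarrow> nat list \<Rightarrow> (nat \<Rightarrow> int) \<Rightarrow> (nat \<Rightarrow> int) \<Rightarrow> bool" where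
  "column_flags n lam mu a b \<longleftrightarrow> part lam 1 \<le> n \<and>
     (\<forall>i. 1 \<le> i \<and> i < n \<and> conjp mu i < conjp lam (i + 1) \<longrightarrow>
        a i - a (i + 1) \<le> int (conjp mu i) - int (conjp mu (i + 1)) + 1 \<and>
        b i - b (i + 1) \<le> int (conjp lam i) - int (conjp lam (i + 1)) + 1)"

definition aconj :: "nat list \<Rightarrow> int \<Rightarrow> (nat \<Rightarrow> int) \<Rightarrow> nat \<Rightarrow> int" where
  "aconj mu d a i = a i + ctop mu d i"

definition bconj :: "nat list \<Rightarrow> int \<Rightarrow> (nat \<Rightarrow> int) \<Rightarrow> nat \<Rightarrow> int" where
  "bconj lam d b i = b i + cbot lam d i"

definition esym :: "'a::comm_ring_1 list \<Rightarrow> nat \<Rightarrow> 'a" where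
  "esym xs k = (\<Sum>S \<in> {S. S \<subseteq> {0..<length xs} \<and> card S = k}. \<Prod>i\<in>S. xs ! i)"

definition hsym :: "'a::comm_ring_1 list \<Rightarrow> nat \<Rightarrow> 'a" where
  "hsym xs k = (\<Sum>f \<in> {f \<in> {0..<length xs} \<rightarrow>\<^sub>E {..k}. (\<Sum>i<length xs. f i) = k}.
                   \<Prod>i<length xs. (xs ! i) ^ (f i))"

definition esup :: "'a::comm_ring_1 list \<Rightarrow> 'a list \<Rightarrow> int \<Rightarrow> 'a" where
  "esup X W n = (if n < 0 then 0 else
     (\<Sum>i=0..nat n. (-1) ^ (nat n - i) * esym X i * hsym W (nat n - i)))"

definition varseq :: "(int \<Rightarrow> 'a) \<Rightarrow> int \<Rightarrow> int \<Rightarrow> 'a list" where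
  "varseq w p q = map w [p..q]"

definition bar :: "'a::comm_ring_1 list \<Rightarrow> 'a list" where
  "bar xs = map uminus xs"

text \<open>Sequences indexed from 1, extended by 0 at indices \<le> 0.\<close>
definition ext0 :: "(nat \<Rightarrow> 'a::comm_ring_1) \<Rightarrow> int \<Rightarrow> 'a" where
  "ext0 f k = (if k \<le> 0 then 0 else f (nat k))"

definition jtdet :: "nat \<Rightarrow> (nat \<Rightarrow> nat \<Rightarrow> 'a::comm_ring_1) \<Rightarrow> 'a" where
  "jtdet n M = det (mat n n (\<lambda>(i, j). M (i + 1) (j + 1)))"

definition Sflag :: "nat \<Rightarrow> nat list \<Rightarrow> nat list \<Rightarrow> int \<Rightarrow> (nat \<Rightarrow> int) \<Rightarrow> (nat \<Rightarrow> int)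
    \<Rightarrow> (int \<Rightarrow> 'a::comm_ring_1) \<Rightarrow> (int \<Rightarrow> 'a) \<Rightarrow> 'a" where
  "Sflag n lam mu d a b y z = jtdet n (\<lambda>i j.
      esup (varseq y (a j) (b i)) (varseq z (aconj mu d a j) (bconj lam d b i))
           (int (conjp lam i) - int i - int (conjp mu j) + int j))"

definition gy :: "nat \<Rightarrow> (nat \<Rightarrow> 'a::comm_ring_1) \<Rightarrow> (nat \<Rightarrow> 'a) \<Rightarrow> (nat \<Rightarrow> 'a) \<Rightarrow> int \<Rightarrow> 'a" where
  "gy m x \<alpha> \<beta> i = (if 1 \<le> i \<and> i \<le> int m then x (nat i)
                   else if i > int m then \<beta> (nat (i - int m)) else - \<alpha> (nat (1 - i)))"

definition gz :: "nat \<Rightarrow> (nat \<Rightarrow> 'a::comm_ring_1) \<Rightarrow> (nat \<Rightarrow> 'a) \<Rightarrow> int \<Rightarrow> 'a" where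
  "gz m \<alpha> \<beta> i = (if 1 \<le> i \<and> i \<le> int m then 0
                 else if i > int m then - \<alpha> (nat (i - int m)) else \<beta> (nat (1 - i)))"

definition gflag :: "nat \<Rightarrow> nat \<Rightarrow> nat list \<Rightarrow> nat list \<Rightarrow> int \<Rightarrow> (nat \<Rightarrow> int) \<Rightarrow> (nat \<Rightarrow> int)
    \<Rightarrow> (nat \<Rightarrow> 'a::comm_ring_1) \<Rightarrow> (nat \<Rightarrow> 'a) \<Rightarrow> (nat \<Rightarrow> 'a) \<Rightarrow> 'a" where
  "gflag m n lam mu d a b x \<alpha> \<beta> = Sflag n lam mu d a b (gy m x \<alpha> \<beta>) (gz m \<alpha> \<beta>)"

definition gdual :: "nat \<Rightarrow> nat \<Rightarrow> nat list \<Rightarrow> nat list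
    \<Rightarrow> (nat \<Rightarrow> 'a::comm_ring_1) \<Rightarrow> (nat \<Rightarrow> 'a) \<Rightarrow> (nat \<Rightarrow> 'a) \<Rightarrow> 'a" where
  "gdual m n lam mu x \<alpha> \<beta> = jtdet n (\<lambda>i j.
      esup (varseq (\<lambda>k. x (nat k)) 1 (int m) @ bar (varseq (ext0 \<alpha>) 1 (int j - 1))
              @ varseq (ext0 \<beta>) 1 (int (conjp lam i) - 1))
           (bar (varseq (ext0 \<alpha>) 1 (int i - 1)) @ varseq (ext0 \<beta>) 1 (int (conjp mu j)))
           (int (conjp lam i) - int i - int (conjp mu j) + int j))"

definition tau :: "int \<Rightarrow> int" where "tau k = - k + 1"
definition eta :: "nat \<Rightarrow> int \<Rightarrow> int" where "eta m k = k - int m"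

end

theory Submission
  imports Defs "HOL-Computational_Algebra.Polynomial"
begin

(* e_k(X) and h_k(W) are the coefficients of t^k in the products over X of (1 + v t)
   and over W of the geometric series in v t, so e_N(X/W) depends only on these products: the
   order of the variables is irrelevant and variables equal to 0 may be added or removed.
   Under the g-specialization an interval y_{A..B} of the y-variables consists of the block
   x_{max 1 A..min m B}, the negated alphas indexed by the reflection k -> -k+1 of its
   nonpositive part and the betas indexed by the shift k -> k-m of its part above m, up to
   zeros; similarly for z.  This gives the first identity entry by entry, for arbitrary flags.
   For a usual skew shape with a_i = -i+2, b_i = lam'_i+m-1 these entries are, up to zeros,
   those of g_{lam/mu} in the rows i <= lam_1; in the rows i > lam_1 both matrices vanish
   left of the diagonal and are 1 on it, so the determinants agree. *)

definition esym_poly :: "'a::comm_ring_1 list \<Rightarrow> 'a poly" where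
  "esym_poly xs = prod_list (map (\<lambda>v. [:1, v:]) xs)"

(* The geometric series of v t, truncated above degree k: this does not affect the
   coefficient of t^k. *)
definition hsym_poly :: "nat \<Rightarrow> 'a::comm_ring_1 list \<Rightarrow> 'a poly" where
  "hsym_poly k xs = prod_list (map (\<lambda>v. \<Sum>j\<le>k. monom (v ^ j) j) xs)"

lemma prod_monom: "finite A \<Longrightarrow> (\<Prod>i\<in>A. monom (f i) (g i)) = monom (\<Prod>i\<in>A. f i) (\<Sum>i\<in>A. g i)"
  by (induction A rule: finite_induct) (auto simp: mult_monom)

lemma prod_list_map_conv_prod_nth: "prod_list (map f xs) = (\<Prod>i\<in>{0..<length xs}. f (xs ! i))"
  by (subst prod.list_conv_set_nth) simp

lemma coeff_esym_poly: "coeff (esym_poly xs) k = esym xs k"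
proof -
  let ?A = "{0..<length xs}"
  have "esym_poly xs = (\<Prod>i\<in>?A. monom (xs ! i) 1 + 1)"
    unfolding esym_poly_def prod_list_map_conv_prod_nth
    by (intro prod.cong refl) (simp add: monom_Suc monom_0 one_pCons)
  also have "\<dots> = (\<Sum>B\<in>Pow ?A. (\<Prod>i\<in>B. monom (xs ! i) 1) * (\<Prod>i\<in>?A - B. 1))"
    by (rule prod_add) simp
  also have "\<dots> = (\<Sum>B\<in>Pow ?A. monom (\<Prod>i\<in>B. xs ! i) (card B))"
    by (intro sum.cong refl) (auto simp: prod_monom finite_subset)
  finally have "coeff (esym_poly xs) k = (\<Sum>B\<in>Pow ?A. if card B = k then (\<Prod>i\<in>B. xs ! i) else 0)"
    by (simp add: coeff_sum)
  also have "\<dots> = (\<Sum>B\<in>{B\<in>Pow ?A. card B = k}. \<Prod>i\<in>B. xs ! i)"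
    by (rule sum.inter_filter[symmetric]) simp
  also have "{B\<in>Pow ?A. card B = k} = {S. S \<subseteq> ?A \<and> card S = k}"
    by auto
  finally show ?thesis
    unfolding esym_def .
qed

lemma coeff_hsym_poly: "coeff (hsym_poly k xs) k = hsym xs k"
proof -
  let ?A = "{0..<length xs}" and ?F = "PiE {0..<length xs} (\<lambda>_. {..k})"
  have "hsym_poly k xs = (\<Prod>i\<in>?A. \<Sum>j\<in>{..k}. monom ((xs ! i) ^ j) j)"
    unfolding hsym_poly_def prod_list_map_conv_prod_nth by simp
  also have "\<dots> = (\<Sum>g\<in>?F. \<Prod>i\<in>?A. monom ((xs ! i) ^ g i) (g i))"
    by (rule prod_sum_PiE) auto
  also have "\<dots> = (\<Sum>g\<in>?F. monom (\<Prod>i\<in>?A. (xs ! i) ^ g i) (\<Sum>i\<in>?A. g i))"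
    by (intro sum.cong refl) (simp add: prod_monom)
  finally have "coeff (hsym_poly k xs) k =
      (\<Sum>g\<in>?F. if (\<Sum>i\<in>?A. g i) = k then \<Prod>i\<in>?A. (xs ! i) ^ g i else 0)"
    by (simp add: coeff_sum)
  also have "\<dots> = (\<Sum>g\<in>{g\<in>?F. (\<Sum>i\<in>?A. g i) = k}. \<Prod>i\<in>?A. (xs ! i) ^ g i)"
    by (rule sum.inter_filter[symmetric]) (simp add: finite_PiE)
  finally show ?thesis
    unfolding hsym_def by (simp only: atLeast0LessThan)
qed

lemma esup_cong_sym_polys:
  assumes "esym_poly X = esym_poly X'" and "\<And>k. hsym_poly k W = hsym_poly k W'"
  shows "esup X W N = esup X' W' N"
  unfolding esup_def coeff_esym_poly[symmetric] coeff_hsym_poly[symmetric] assms ..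

lemma esup_neg: "N < 0 \<Longrightarrow> esup X W N = 0"
  by (simp add: esup_def)

lemma esup_0: "esup X W 0 = 1"
proof -
  have "coeff (esym_poly X) 0 = 1"
    by (induction X) (auto simp: esym_poly_def coeff_mult_0)
  moreover have "hsym_poly 0 W = 1"
    by (induction W) (auto simp: hsym_poly_def)
  ultimately show ?thesis
    by (simp add: esup_def coeff_esym_poly[symmetric] coeff_hsym_poly[symmetric])
qed

lemma esym_poly_append: "esym_poly (xs @ ys) = esym_poly xs * esym_poly ys"
  by (simp add: esym_poly_def)

lemma hsym_poly_append: "hsym_poly k (xs @ ys) = hsym_poly k xs * hsym_poly k ys"
  by (simp add: hsym_poly_def)

lemma prod_list_map_varseq: "prod_list (map F (varseq w p q)) = (\<Prod>k\<in>{p..q}. F (w k))"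
  by (simp add: varseq_def comp_def prod.distinct_set_conv_list[symmetric])

lemma esym_poly_varseq: "esym_poly (varseq w p q) = (\<Prod>k\<in>{p..q}. [:1, w k:])"
  unfolding esym_poly_def by (rule prod_list_map_varseq)

lemma hsym_poly_varseq: "hsym_poly j (varseq w p q) = (\<Prod>k\<in>{p..q}. \<Sum>i\<le>j. monom (w k ^ i) i)"
  unfolding hsym_poly_def by (rule prod_list_map_varseq)

lemma esym_poly_bar_varseq: "esym_poly (bar (varseq w p q)) = (\<Prod>k\<in>{p..q}. [:1, - w k:])"
  unfolding esym_poly_def bar_def by (simp add: comp_def prod_list_map_varseq)

lemma hsym_poly_bar_varseq:
  "hsym_poly j (bar (varseq w p q)) = (\<Prod>k\<in>{p..q}. \<Sum>i\<le>j. monom ((- w k) ^ i) i)"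
  unfolding hsym_poly_def bar_def by (simp add: comp_def prod_list_map_varseq)

lemma sum_monom_zero_power: "(\<Sum>i\<le>k. monom ((0::'a::comm_ring_1) ^ i) i) = 1"
  by (induction k) (auto simp: one_pCons monom_0)

lemma prod_int_interval_extend_nonpos:
  fixes g :: "int \<Rightarrow> 'b::comm_monoid_mult"
  assumes "\<And>k. k \<le> 0 \<Longrightarrow> g k = 1"
  shows "(\<Prod>k\<in>{max 1 L..U}. g k) = (\<Prod>k\<in>{L..U}. g k)"
  by (rule prod.mono_neutral_left) (auto simp: assms)

lemma prod_int_interval_from_1:
  fixes g :: "int \<Rightarrow> 'b::comm_monoid_mult"
  assumes "\<And>k. k \<le> 0 \<Longrightarrow> g k = 1" and "L \<le> 1"
  shows "(\<Prod>k\<in>{L..U}. g k) = (\<Prod>k\<in>{1..U}. g k)"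
  using prod_int_interval_extend_nonpos[of g L U, OF assms(1)] assms(2) by simp

lemma prod_int_interval_reflect:
  fixes g :: "int \<Rightarrow> 'b::comm_monoid_mult"
  shows "(\<Prod>k\<in>{L..U}. g k) = (\<Prod>k\<in>{c - U..c - L}. g (c - k))"
  by (rule prod.reindex_bij_witness[where i="\<lambda>k. c - k" and j="\<lambda>k. c - k"]) auto

lemma prod_int_interval_shift:
  fixes g :: "int \<Rightarrow> 'b::comm_monoid_mult"
  shows "(\<Prod>k\<in>{L..U}. g k) = (\<Prod>k\<in>{L - c..U - c}. g (k + c))"
  by (rule prod.reindex_bij_witness[where i="\<lambda>k. k + c" and j="\<lambda>k. k - c"]) auto

lemma prod_gy_split:
  fixes F :: "'a::comm_ring_1 \<Rightarrow> 'b::comm_monoid_mult"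
  assumes F0: "F 0 = 1"
  shows "(\<Prod>k\<in>{A..B}. F (gy m x \<alpha> \<beta> k)) =
    (\<Prod>k\<in>{max 1 A..min (int m) B}. F (x (nat k))) * (\<Prod>k\<in>{1 - B..1 - A}. F (- ext0 \<alpha> k))
    * (\<Prod>k\<in>{A - int m..B - int m}. F (ext0 \<beta> k))"
proof -
  let ?g = "\<lambda>k. F (gy m x \<alpha> \<beta> k)"
  have "{A..B} = {A..min 0 B} \<union> ({max 1 A..min (int m) B} \<union> {max A (int m + 1)..B})"
    by auto
  then have "(\<Prod>k\<in>{A..B}. ?g k) = (\<Prod>k\<in>{A..min 0 B}. ?g k)
      * ((\<Prod>k\<in>{max 1 A..min (int m) B}. ?g k) * (\<Prod>k\<in>{max A (int m + 1)..B}. ?g k))"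
    by (simp only:) (subst prod.union_disjoint, auto)+
  also have "(\<Prod>k\<in>{max 1 A..min (int m) B}. ?g k) = (\<Prod>k\<in>{max 1 A..min (int m) B}. F (x (nat k)))"
    by (intro prod.cong refl) (auto simp: gy_def)
  also have "(\<Prod>k\<in>{A..min 0 B}. ?g k) = (\<Prod>k\<in>{1 - min 0 B..1 - A}. ?g (1 - k))"
    by (rule prod_int_interval_reflect)
  also have "\<dots> = (\<Prod>k\<in>{max 1 (1 - B)..1 - A}. F (- ext0 \<alpha> k))"
    by (intro prod.cong) (auto simp: gy_def ext0_def)
  also have "\<dots> = (\<Prod>k\<in>{1 - B..1 - A}. F (- ext0 \<alpha> k))"
    by (rule prod_int_interval_extend_nonpos) (simp add: ext0_def F0)
  also have "(\<Prod>k\<in>{max A (int m + 1)..B}. ?g k)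
      = (\<Prod>k\<in>{max A (int m + 1) - int m..B - int m}. ?g (k + int m))"
    by (rule prod_int_interval_shift)
  also have "\<dots> = (\<Prod>k\<in>{max 1 (A - int m)..B - int m}. F (ext0 \<beta> k))"
    by (intro prod.cong) (auto simp: gy_def ext0_def)
  also have "\<dots> = (\<Prod>k\<in>{A - int m..B - int m}. F (ext0 \<beta> k))"
    by (rule prod_int_interval_extend_nonpos) (simp add: ext0_def F0)
  finally show ?thesis
    by (simp add: ac_simps)
qed

lemma gz_eq_gy: "gz m \<alpha> \<beta> = gy m (\<lambda>_. 0) (\<lambda>k. - \<beta> k) (\<lambda>k. - \<alpha> k)"
  by (auto simp: fun_eq_iff gz_def gy_def)

lemma ext0_uminus: "ext0 (\<lambda>k. - f k) = (\<lambda>k. - ext0 f k)"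
  by (auto simp: fun_eq_iff ext0_def)

lemma prod_gz_split:
  fixes F :: "'a::comm_ring_1 \<Rightarrow> 'b::comm_monoid_mult"
  assumes F0: "F 0 = 1"
  shows "(\<Prod>k\<in>{A..B}. F (gz m \<alpha> \<beta> k)) =
    (\<Prod>k\<in>{A - int m..B - int m}. F (- ext0 \<alpha> k)) * (\<Prod>k\<in>{1 - B..1 - A}. F (ext0 \<beta> k))"
  unfolding gz_eq_gy prod_gy_split[of F, OF F0] ext0_uminus by (simp add: F0 ac_simps)

lemma esup_g_specialization:
  "esup (varseq (gy m x \<alpha> \<beta>) A B) (varseq (gz m \<alpha> \<beta>) A' B') N =
   esup (varseq (\<lambda>k. x (nat k)) (max 1 A) (min (int m) B)
           @ bar (varseq (ext0 \<alpha>) (tau B) (tau A))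
           @ varseq (ext0 \<beta>) (eta m A) (eta m B))
        (bar (varseq (ext0 \<alpha>) (eta m A') (eta m B'))
           @ varseq (ext0 \<beta>) (tau B') (tau A')) N"
proof (rule esup_cong_sym_polys)
  show "esym_poly (varseq (gy m x \<alpha> \<beta>) A B) =
        esym_poly (varseq (\<lambda>k. x (nat k)) (max 1 A) (min (int m) B)
           @ bar (varseq (ext0 \<alpha>) (tau B) (tau A))
           @ varseq (ext0 \<beta>) (eta m A) (eta m B))"
    unfolding esym_poly_append esym_poly_varseq esym_poly_bar_varseq
    by (subst prod_gy_split[where F="\<lambda>v. [:1, v:]"]) (simp_all add: tau_def eta_def ac_simps)
  fix k
  show "hsym_poly k (varseq (gz m \<alpha> \<beta>) A' B') =
        hsym_poly k (bar (varseq (ext0 \<alpha>) (eta m A') (eta m B'))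
           @ varseq (ext0 \<beta>) (tau B') (tau A'))"
    unfolding hsym_poly_append hsym_poly_varseq hsym_poly_bar_varseq
    by (subst prod_gz_split[where F="\<lambda>v. \<Sum>i\<le>k. monom (v ^ i) i"])
      (simp_all add: tau_def eta_def ac_simps sum_monom_zero_power)
qed

lemma permutes_fixes_if_not_decreasing:
  assumes p: "p permutes {0..<(n::nat)}" and ge: "\<forall>i\<in>{q..<n}. i \<le> p i" and i: "i \<in> {q..<n}"
  shows "p i = i"
  using i
proof (induction "n - i" arbitrary: i rule: less_induct)
  case less
  show ?case
  proof (rule ccontr)
    assume ne: "p i \<noteq> i"
    with ge less.prems have "i < p i" by force
    moreover have "p i < n"
      using permutes_in_image[OF p] less.prems by auto
    ultimately have "p (p i) = p i"
      using less.prems by (intro less.hyps) auto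
    then show False
      using permutes_inj[OF p] ne by (metis injD)
  qed
qed

(* Only permutations fixing every row from q on contribute, so the determinant is determined
   by the first q rows. *)
lemma det_eq_if_tail_unitriangular:
  assumes A: "A \<in> carrier_mat n n" and B: "B \<in> carrier_mat n n"
    and top: "\<And>i j. i < q \<Longrightarrow> i < n \<Longrightarrow> j < n \<Longrightarrow> A $$ (i, j) = B $$ (i, j)"
    and low: "\<And>i j. q \<le> i \<Longrightarrow> i < n \<Longrightarrow> j < i \<Longrightarrow> A $$ (i, j) = 0 \<and> B $$ (i, j) = 0"
    and diag: "\<And>i. q \<le> i \<Longrightarrow> i < n \<Longrightarrow> A $$ (i, i) = 1 \<and> B $$ (i, i) = 1"
  shows "det A = det B"
  unfolding det_def'[OF A] det_def'[OF B]
proof (rule sum.cong[OF refl])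
  fix p assume "p \<in> {p. p permutes {0..<n}}"
  then have p: "p permutes {0..<n}" by simp
  have "(\<Prod>i = 0..<n. A $$ (i, p i)) = (\<Prod>i = 0..<n. B $$ (i, p i))"
  proof (cases "\<exists>i\<in>{q..<n}. p i < i")
    case True
    then obtain i where i: "i \<in> {q..<n}" "p i < i" by blast
    then have "i \<in> {0..<n}" "A $$ (i, p i) = 0" "B $$ (i, p i) = 0"
      using low[of i "p i"] by auto
    then have "(\<Prod>i = 0..<n. A $$ (i, p i)) = 0" "(\<Prod>i = 0..<n. B $$ (i, p i)) = 0"
      by (auto intro!: prod_zero)
    then show ?thesis
      by simp
  next
    case False
    then have fixes_tail: "p i = i" if "i \<in> {q..<n}" for i
      using permutes_fixes_if_not_decreasing[OF p _ that] by (simp add: not_less)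
    show ?thesis
    proof (rule prod.cong[OF refl])
      fix i assume i: "i \<in> {0..<n}"
      then have "p i < n" using permutes_in_image[OF p] by simp
      show "A $$ (i, p i) = B $$ (i, p i)"
      proof (cases "i < q")
        case True
        then show ?thesis using top i \<open>p i < n\<close> by simp
      next
        case False
        then show ?thesis using i diag fixes_tail by simp
      qed
    qed
  qed
  then show "signof p * (\<Prod>i = 0..<n. A $$ (i, p i)) = signof p * (\<Prod>i = 0..<n. B $$ (i, p i))"
    by simp
qed

lemma jtdet_eq_if_tail_unitriangular:
  assumes top: "\<And>i j. 1 \<le> i \<Longrightarrow> i \<le> q \<Longrightarrow> 1 \<le> j \<Longrightarrow> j \<le> n \<Longrightarrow> M i j = M' i j"
    and low: "\<And>i j. q < i \<Longrightarrow> i \<le> n \<Longrightarrow> j < i \<Longrightarrow> M i j = 0 \<and> M' i j = 0"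
    and diag: "\<And>i. q < i \<Longrightarrow> i \<le> n \<Longrightarrow> M i i = 1 \<and> M' i i = 1"
  shows "jtdet n M = jtdet n M'"
  unfolding jtdet_def
  by (rule det_eq_if_tail_unitriangular[where q=q and n=n]) (simp_all add: top low diag Suc_le_eq)

lemma part_le_first_part: "is_partition lam \<Longrightarrow> p \<in> set lam \<Longrightarrow> p \<le> part lam 1"
  by (cases lam) (auto simp: is_partition_def part_def)

lemma conjp_eq_0: "is_partition lam \<Longrightarrow> part lam 1 < j \<Longrightarrow> conjp lam j = 0"
  unfolding conjp_def using part_le_first_part by (fastforce simp: filter_empty_conv)

lemma conjp_pos: "1 \<le> j \<Longrightarrow> j \<le> part lam 1 \<Longrightarrow> 1 \<le> conjp lam j"
  by (cases lam) (auto simp: part_def conjp_def)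

lemma esup_split_eq_gdual_entry:
  assumes "1 \<le> L" "1 \<le> j" "1 \<le> i" "A = 2 - int j" "B = int L + int m - 1"
    and "A' = 1 - int Mu" "B' = int i + int m - 1"
  shows "esup (varseq xf (max 1 A) (min (int m) B) @ bar (varseq (ext0 \<alpha>) (tau B) (tau A))
               @ varseq (ext0 \<beta>) (eta m A) (eta m B))
              (bar (varseq (ext0 \<alpha>) (eta m A') (eta m B')) @ varseq (ext0 \<beta>) (tau B') (tau A')) N
       = esup (varseq xf 1 (int m) @ bar (varseq (ext0 \<alpha>) 1 (int j - 1)) @ varseq (ext0 \<beta>) 1 (int L - 1))
              (bar (varseq (ext0 \<alpha>) 1 (int i - 1)) @ varseq (ext0 \<beta>) 1 (int Mu)) N"
proof (rule esup_cong_sym_polys)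
  have bounds: "max 1 A = 1" "min (int m) B = int m" "tau B = 2 - int L - int m" "tau A = int j - 1"
    "eta m A = 2 - int j - int m" "eta m B = int L - 1" "eta m A' = 1 - int Mu - int m"
    "eta m B' = int i - 1" "tau B' = 2 - int i - int m" "tau A' = int Mu"
    using assms by (auto simp: tau_def eta_def)
  show "esym_poly (varseq xf (max 1 A) (min (int m) B) @ bar (varseq (ext0 \<alpha>) (tau B) (tau A))
               @ varseq (ext0 \<beta>) (eta m A) (eta m B)) =
        esym_poly (varseq xf 1 (int m) @ bar (varseq (ext0 \<alpha>) 1 (int j - 1))
               @ varseq (ext0 \<beta>) 1 (int L - 1))"
    unfolding esym_poly_append esym_poly_varseq esym_poly_bar_varseq bounds
    by (subst (1 2) prod_int_interval_from_1) (use assms in \<open>auto simp: ext0_def one_pCons\<close>)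
  fix k
  show "hsym_poly k (bar (varseq (ext0 \<alpha>) (eta m A') (eta m B')) @ varseq (ext0 \<beta>) (tau B') (tau A')) =
        hsym_poly k (bar (varseq (ext0 \<alpha>) 1 (int i - 1)) @ varseq (ext0 \<beta>) 1 (int Mu))"
    unfolding hsym_poly_append hsym_poly_varseq hsym_poly_bar_varseq bounds
    by (subst (1 2) prod_int_interval_from_1) (use assms in \<open>auto simp: ext0_def sum_monom_zero_power\<close>)
qed

lemma gflag_usual_skew_eq_gdual:
  assumes shape: "skew_shape lam mu" and n_ge: "part lam 1 \<le> n"
    and flags: "\<forall>i\<in>{1..n}. a i = - int i + 2 \<and> b i = int (conjp lam i) + int m - 1"
  shows "gflag m n lam mu 0 a b x \<alpha> \<beta> = gdual m n lam mu x \<alpha> \<beta>"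
proof -
  have "is_partition lam" "is_partition mu" "part mu 1 \<le> part lam 1"
    using shape by (auto simp: skew_shape_def)
  then have tail: "conjp lam i = 0" "conjp mu i = 0" if "part lam 1 < i" for i
    using that by (auto intro: conjp_eq_0)
  show ?thesis
    unfolding gflag_def Sflag_def gdual_def esup_g_specialization
    apply (rule jtdet_eq_if_tail_unitriangular[where q="part lam 1"])
    subgoal for i j
      using conjp_pos[of i lam] flags n_ge
      by (intro esup_split_eq_gdual_entry)
        (auto simp: aconj_def bconj_def ctop_def cbot_def content_def)
    subgoal for i j
      using tail by (simp add: esup_neg)
    subgoal for i
      using tail by (simp add: esup_0)
    done
qed

theorem proposition3p5:
  fixes m n :: nat and lam mu :: "nat list"
    and x \<alpha> \<beta> :: "nat \<Rightarrow> 'a::comm_ring_1"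
  assumes shape: "skew_shape lam mu"
    and n_ge: "part lam 1 \<le> n"
  shows "(\<forall>(r::int) (a::nat \<Rightarrow> int) (b::nat \<Rightarrow> int).
           column_flags n lam mu a b \<longrightarrow>
           gflag m n lam mu (roffset lam r) a b x \<alpha> \<beta> =
           jtdet n (\<lambda>i j.
             esup (varseq (\<lambda>k. x (nat k)) (max 1 (a j)) (min (int m) (b i))
                   @ bar (varseq (ext0 \<alpha>) (tau (b i)) (tau (a j)))
                   @ varseq (ext0 \<beta>) (eta m (a j)) (eta m (b i)))
                  (bar (varseq (ext0 \<alpha>) (eta m (aconj mu (roffset lam r) a j))
                                          (eta m (bconj lam (roffset lam r) b i)))
                   @ varseq (ext0 \<beta>) (tau (bconj lam (roffset lam r) b i))
                                      (tau (aconj mu (roffset lam r) a j)))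
                  (int (conjp lam i) - int i - int (conjp mu j) + int j)))
       \<and> (\<forall>(a::nat \<Rightarrow> int) (b::nat \<Rightarrow> int).
           (\<forall>i\<in>{1..n}. a i = - int i + 2 \<and> b i = int (conjp lam i) + int m - 1) \<longrightarrow>
           Sflag n lam mu 0 a b (gy m x \<alpha> \<beta>) (gz m \<alpha> \<beta>) = gflag m n lam mu 0 a b x \<alpha> \<beta>
           \<and> gflag m n lam mu 0 a b x \<alpha> \<beta> = gdual m n lam mu x \<alpha> \<beta>)"
  using gflag_usual_skew_eq_gdual[OF shape n_ge]
  by (simp add: gflag_def Sflag_def esup_g_specialization) blast

end
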